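(* Let $X$ be a locally compact non-compact group. A filter $\xi$ on $X$ is coarse if and only if it is round and invariant.
   Context: A filter on $X$ is a nonempty family of subsets not containing $\emptyset$, stable under finite intersections and supersets. $\xi$ is round if for every $F\in\xi$ there are a neighborhood $V$ of the identity $e$ and $G\in\xi$ with $VG=\{xy:x\in V,y\in G\}\subset F$ (i.e. the sets $VG$ form a basis of $\xi$). $\xi$ is (left) invariant if $xF\in\xi$ for all $x\in X$ and $F\in\xi$. $\xi$ is coarse if for every $F\in\xi$ and every compact $K\subset X$ there is $G\in\xi$ with $KG\subset F$. *)

theory Defs
  imports "HOL-Analysis.Analysis"
begin

text \<open>Groups are written additively: the group is a type of class topological_group_add
  (group_add need not be commutative); the identity is 0 and the product xy is x + y.\<close>

definition set_prod :: "'a::plus set \<Rightarrow> 'a set \<Rightarrow> 'a set" where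
  "set_prod A B = {x + y | x y. x \<in> A \<and> y \<in> B}"

definition is_filter :: "'a set set \<Rightarrow> bool" where
  "is_filter \<xi> \<longleftrightarrow> \<xi> \<noteq> {} \<and> {} \<notin> \<xi>
     \<and> (\<forall>F\<in>\<xi>. \<forall>G\<in>\<xi>. F \<inter> G \<in> \<xi>)
     \<and> (\<forall>F\<in>\<xi>. \<forall>G. F \<subseteq> G \<longrightarrow> G \<in> \<xi>)"

definition nbhd_of_identity :: "'a::{topological_space,zero} set \<Rightarrow> bool" where
  "nbhd_of_identity V \<longleftrightarrow> (\<exists>U. open U \<and> 0 \<in> U \<and> U \<subseteq> V)"

definition round_filter :: "'a::{topological_space,monoid_add} set set \<Rightarrow> bool" where
  "round_filter \<xi> \<longleftrightarrow>
     (\<forall>F\<in>\<xi>. \<exists>V G. nbhd_of_identity V \<and> G \<in> \<xi> \<and> set_prod V G \<subseteq> F)"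

definition invariant_filter :: "'a::plus set set \<Rightarrow> bool" where
  "invariant_filter \<xi> \<longleftrightarrow> (\<forall>x. \<forall>F\<in>\<xi>. (\<lambda>y. x + y) ` F \<in> \<xi>)"

definition coarse_filter :: "'a::{topological_space,plus} set set \<Rightarrow> bool" where
  "coarse_filter \<xi> \<longleftrightarrow>
     (\<forall>F\<in>\<xi>. \<forall>K. compact K \<longrightarrow> (\<exists>G\<in>\<xi>. set_prod K G \<subseteq> F))"

end

theory Submission
  imports Defs
begin

text \<open>Coarse implies round because the compact set may be taken to be a compact neighbourhood
  of the identity, and coarse implies invariant by taking the compact set to be a singleton.
  Conversely, a compact set K is covered by finitely many right translates U + d of an open
  identity neighbourhood U with U + G contained in F; intersecting the left translates -d + G
  (which lie in the filter by invariance) gives a member G' with D + G' \<subseteq> G, hence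
  K + G' \<subseteq> U + D + G' \<subseteq> U + G \<subseteq> F.\<close>

lemma set_prod_assoc:
  fixes A B C :: "'a::semigroup_add set"
  shows "set_prod (set_prod A B) C = set_prod A (set_prod B C)"
  unfolding set_prod_def by (auto simp: add.assoc) (metis add.assoc)+

lemma set_prod_mono:
  "A \<subseteq> A' \<Longrightarrow> B \<subseteq> B' \<Longrightarrow> set_prod A B \<subseteq> set_prod A' B'"
  unfolding set_prod_def by blast

lemma set_prod_singleton:
  fixes G :: "'a::plus set"
  shows "set_prod {x} G = (\<lambda>y. x + y) ` G"
  unfolding set_prod_def by blast

lemma open_right_translate:
  fixes U :: "'a::topological_group_add set"
  assumes "open U"
  shows "open ((\<lambda>x. x + k) ` U)"
proof -
  have "(\<lambda>x. x + k) ` U = (\<lambda>x. x - k) -` U"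
    by (force simp: diff_add_cancel add_diff_cancel image_iff)
  moreover have "continuous_on UNIV (\<lambda>x::'a. x - k)"
    by (intro continuous_intros)
  ultimately show ?thesis
    using assms by (simp add: continuous_on_open_vimage)
qed

lemma compact_subset_finite_right_translates:
  fixes K U :: "'a::topological_group_add set"
  assumes "compact K" "open U" "0 \<in> U"
  obtains D where "finite D" "K \<subseteq> set_prod U D"
proof -
  have "K \<subseteq> (\<Union>k\<in>K. (\<lambda>x. x + k) ` U)"
    using assms(3) by force
  then obtain D where "D \<subseteq> K" "finite D" "K \<subseteq> (\<Union>k\<in>D. (\<lambda>x. x + k) ` U)"
    using compactE_image[OF assms(1)] open_right_translate[OF assms(2)] by metis
  moreover have "(\<Union>k\<in>D. (\<lambda>x. x + k) ` U) = set_prod U D"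
    unfolding set_prod_def by blast
  ultimately show thesis
    using that by auto
qed

lemma is_filter_Inter_finite:
  assumes "is_filter \<xi>" "finite D" "G \<in> \<xi>" "\<And>k. k \<in> D \<Longrightarrow> H k \<in> \<xi>"
  shows "G \<inter> \<Inter>(H ` D) \<in> \<xi>"
  using assms(2,4)
proof (induction D rule: finite_induct)
  case empty
  then show ?case using assms(3) by simp
next
  case (insert d D)
  have "G \<inter> \<Inter>(H ` insert d D) = H d \<inter> (G \<inter> \<Inter>(H ` D))" by auto
  then show ?case using insert assms(1) unfolding is_filter_def by auto
qed

lemma coarse_imp_round_filter:
  fixes \<xi> :: "'a::{topological_space,monoid_add} set set"
  assumes "locally_compact_space (euclidean :: 'a topology)" "coarse_filter \<xi>"
  shows "round_filter \<xi>"
  unfolding round_filter_def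
proof
  fix F assume "F \<in> \<xi>"
  obtain U K where "open U" "compact K" "(0::'a) \<in> U" "U \<subseteq> K"
    using assms(1) unfolding locally_compact_space_def by simp metis
  then have "nbhd_of_identity K"
    unfolding nbhd_of_identity_def by blast
  moreover obtain G where "G \<in> \<xi>" "set_prod K G \<subseteq> F"
    using assms(2) \<open>F \<in> \<xi>\<close> \<open>compact K\<close> unfolding coarse_filter_def by blast
  ultimately show "\<exists>V G. nbhd_of_identity V \<and> G \<in> \<xi> \<and> set_prod V G \<subseteq> F"
    by blast
qed

lemma coarse_imp_invariant_filter:
  fixes \<xi> :: "'a::{topological_space,group_add} set set"
  assumes "is_filter \<xi>" "coarse_filter \<xi>"
  shows "invariant_filter \<xi>"
  unfolding invariant_filter_def
proof (intro allI ballI)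
  fix x F assume "F \<in> \<xi>"
  then obtain G where "G \<in> \<xi>" and G: "set_prod {-x} G \<subseteq> F"
    using assms(2) unfolding coarse_filter_def by (meson compact_sing)
  have "G \<subseteq> (\<lambda>y. x + y) ` F"
  proof
    fix g assume "g \<in> G"
    then have "-x + g \<in> F"
      using G by (auto simp: set_prod_singleton)
    then show "g \<in> (\<lambda>y. x + y) ` F"
      by (metis add_minus_cancel image_eqI)
  qed
  then show "(\<lambda>y. x + y) ` F \<in> \<xi>"
    using \<open>G \<in> \<xi>\<close> assms(1) unfolding is_filter_def by blast
qed

lemma round_invariant_imp_coarse_filter:
  fixes \<xi> :: "'a::topological_group_add set set"
  assumes "is_filter \<xi>" "round_filter \<xi>" "invariant_filter \<xi>"
  shows "coarse_filter \<xi>"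
  unfolding coarse_filter_def
proof (intro ballI allI impI)
  fix F K assume "F \<in> \<xi>" "compact (K::'a set)"
  obtain V G where "nbhd_of_identity V" "G \<in> \<xi>" and VG: "set_prod V G \<subseteq> F"
    using assms(2) \<open>F \<in> \<xi>\<close> unfolding round_filter_def by blast
  then obtain U where U: "open U" "0 \<in> U" "U \<subseteq> V"
    unfolding nbhd_of_identity_def by blast
  obtain D where "finite D" and KUD: "K \<subseteq> set_prod U D"
    using compact_subset_finite_right_translates[OF \<open>compact K\<close> U(1,2)] by blast
  define G' where "G' = G \<inter> (\<Inter>d\<in>D. (\<lambda>y. -d + y) ` G)"
  have "G' \<in> \<xi>"
    unfolding G'_def
  proof (rule is_filter_Inter_finite[OF assms(1) \<open>finite D\<close> \<open>G \<in> \<xi>\<close>])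
    show "\<And>d. (\<lambda>y. -d + y) ` G \<in> \<xi>"
      using assms(3) \<open>G \<in> \<xi>\<close> unfolding invariant_filter_def by blast
  qed
  have "set_prod D G' \<subseteq> G"
    unfolding set_prod_def G'_def by (auto simp: add.assoc[symmetric])
  have "set_prod K G' \<subseteq> set_prod (set_prod U D) G'"
    using KUD by (rule set_prod_mono) simp
  also have "\<dots> = set_prod U (set_prod D G')"
    by (rule set_prod_assoc)
  also have "\<dots> \<subseteq> set_prod V G"
    using U(3) \<open>set_prod D G' \<subseteq> G\<close> by (rule set_prod_mono)
  finally have "set_prod K G' \<subseteq> F"
    using VG by blast
  with \<open>G' \<in> \<xi>\<close> show "\<exists>G\<in>\<xi>. set_prod K G \<subseteq> F"
    by blast
qed

theorem proposition6p6:
  fixes \<xi> :: "'a::topological_group_add set set"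
  assumes "locally_compact_space (euclidean :: 'a topology)"
    and "\<not> compact (UNIV :: 'a set)"
    and "is_filter \<xi>"
  shows "coarse_filter \<xi> \<longleftrightarrow> round_filter \<xi> \<and> invariant_filter \<xi>"
  using coarse_imp_round_filter[OF assms(1)] coarse_imp_invariant_filter[OF assms(3)]
    round_invariant_imp_coarse_filter[OF assms(3)]
  by blast

end
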